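(* Let $1\le r\le s\le t$ and let $u=ABCd$, $v=A'B'C'd'$ be distinct vertices of $E3C(r,s,t)$ with $A=A'$, $C=C'$ and $d=d'$ (any $d\in\{0,1,2\}$). Then there exist $2r+2$ pairwise internally disjoint $u$–$v$ paths in $E3C(r,s,t)$, each of length at most $s+6$.
   Context: The exchanged 3-ary $n$-cube $E3C(r,s,t)$ ($r,s,t\ge1$, $n=r+s+t+1$): vertices are strings written $x=ABCd$ with $A\in\{0,1,2\}^r$, $B\in\{0,1,2\}^s$, $C\in\{0,1,2\}^t$, $d\in\{0,1,2\}$. Two distinct vertices $x=ABCd$, $y=A'B'C'd'$ are adjacent iff one of: (E0) $A=A',B=B',C=C'$ and $d\ne d'$; (E1) $d=d'=0$, $A=A'$, $B=B'$ and $C,C'$ differ in exactly one position; (E2) $d=d'=1$, $A=A'$, $C=C'$ and $B,B'$ differ in exactly one position; (E3) $d=d'=2$, $B=B'$, $C=C'$ and $A,A'$ differ in exactly one position. Paths are internally disjoint if they share no vertices other than their endpoints; length = number of edges. *)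

theory Defs
  imports Main
begin

type_synonym e3vertex = "nat list \<times> nat list \<times> nat list \<times> nat"

definition ternary :: "nat \<Rightarrow> nat list \<Rightarrow> bool" where
  "ternary k X \<longleftrightarrow> length X = k \<and> (\<forall>x\<in>set X. x < 3)"

definition e3c_verts :: "nat \<Rightarrow> nat \<Rightarrow> nat \<Rightarrow> e3vertex set" where
  "e3c_verts r s t = {(A,B,C,d). ternary r A \<and> ternary s B \<and> ternary t C \<and> d < 3}"

definition differ_one :: "nat list \<Rightarrow> nat list \<Rightarrow> bool" where
  "differ_one X Y \<longleftrightarrow> length X = length Y \<and> card {i. i < length X \<and> X ! i \<noteq> Y ! i} = 1"

definition e3c_adj :: "nat \<Rightarrow> nat \<Rightarrow> nat \<Rightarrow> e3vertex \<Rightarrow> e3vertex \<Rightarrow> bool" where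
  "e3c_adj r s t x y \<longleftrightarrow> x \<in> e3c_verts r s t \<and> y \<in> e3c_verts r s t \<and> x \<noteq> y \<and>
     (case x of (A,B,C,d) \<Rightarrow> case y of (A',B',C',d') \<Rightarrow>
        (A = A' \<and> B = B' \<and> C = C' \<and> d \<noteq> d')
      \<or> (d = 0 \<and> d' = 0 \<and> A = A' \<and> B = B' \<and> differ_one C C')
      \<or> (d = 1 \<and> d' = 1 \<and> A = A' \<and> C = C' \<and> differ_one B B')
      \<or> (d = 2 \<and> d' = 2 \<and> B = B' \<and> C = C' \<and> differ_one A A'))"

text \<open>A path from u to v: a list of distinct vertices, consecutive ones adjacent.
  Its length is the number of edges, i.e. length p - 1.\<close>
definition e3c_path :: "nat \<Rightarrow> nat \<Rightarrow> nat \<Rightarrow> e3vertex \<Rightarrow> e3vertex \<Rightarrow> e3vertex list \<Rightarrow> bool" where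
  "e3c_path r s t u v p \<longleftrightarrow> p \<noteq> [] \<and> hd p = u \<and> last p = v \<and> distinct p \<and>
     set p \<subseteq> e3c_verts r s t \<and>
     (\<forall>i. Suc i < length p \<longrightarrow> e3c_adj r s t (p ! i) (p ! Suc i))"

end

(*
  The two vertices u = (A,B,C,d) and v = (A,B',C,d) are joined through layer 1, where only the
  B-part moves and E3C(r,s,t) looks like the ternary s-cube.  Deleting the B-part of a vertex
  leaves its frame (A,C,d).  A path of frames from (A,C,d) into layer 1, followed by a B-B' path
  of the ternary cube and by the same frames backwards, is a u-v path (a ladder), and ladders whose
  frame paths share only (A,C,d) are internally disjoint.

  For d = 0, the direct step into layer 1, a detour through layer 2 and one ladder through each of
  the 2t neighbours of C in layer 0 give 2t + 2 >= 2r + 2 paths; d = 2 is symmetric, with the 2r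
  neighbours of A.  For d = 1, a detour through layer 0 and one through layer 2 are completed by
  2s internally disjoint B-B' paths of the ternary s-cube: the geodesics flipping the mismatched
  coordinates in each cyclic order, and, for each coordinate i and value c different from B_i and
  B'_i, the path that sets coordinate i to c first and resets it last.
*)

theory Submission
  imports Defs
begin

section \<open>Paths in the ternary cube\<close>

definition mismatches :: "'a list \<Rightarrow> 'a list \<Rightarrow> nat set" where
  "mismatches X Y = {j. j < length X \<and> X ! j \<noteq> Y ! j}"

lemma finite_mismatches [simp]: "finite (mismatches X Y)"
  by (simp add: mismatches_def)

lemma mismatches_self [simp]: "mismatches X X = {}"
  by (simp add: mismatches_def)

lemma differ_one_iff_mismatches:
  "differ_one X Y \<longleftrightarrow> length X = length Y \<and> card (mismatches X Y) = 1"
  by (simp add: differ_one_def mismatches_def)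

lemma differ_one_sym: "differ_one X Y \<Longrightarrow> differ_one Y X"
  unfolding differ_one_def by (simp add: eq_commute)

lemma differ_one_neq: "differ_one X Y \<Longrightarrow> X \<noteq> Y"
  by (auto simp: differ_one_iff_mismatches)

lemma differ_one_update:
  assumes "i < length X" "c \<noteq> X ! i"
  shows "differ_one X (X[i := c])"
proof -
  have "mismatches X (X[i := c]) = {i}"
    using assms by (auto simp: mismatches_def nth_list_update)
  then show ?thesis by (simp add: differ_one_iff_mismatches)
qed

lemma ternary_update: "ternary n X \<Longrightarrow> c < 3 \<Longrightarrow> ternary n (X[i := c])"
  unfolding ternary_def by (auto dest: set_update_subset_insert[THEN subsetD])

lemma list_update_inj:
  assumes "i < length X" "i' < length X" "c \<noteq> X ! i" "X[i := c] = X[i' := c']"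
  shows "i = i' \<and> c = c'"
  using assms by (metis nth_list_update_eq nth_list_update_neq)

definition cube_path :: "nat \<Rightarrow> nat list \<Rightarrow> nat list \<Rightarrow> nat list list \<Rightarrow> bool" where
  "cube_path n X Y W \<longleftrightarrow> W \<noteq> [] \<and> hd W = X \<and> last W = Y \<and> distinct W \<and>
     successively differ_one W \<and> (\<forall>w\<in>set W. ternary n w)"

definition blend :: "'a list \<Rightarrow> 'a list \<Rightarrow> nat set \<Rightarrow> 'a list" where
  "blend X Y S = map (\<lambda>j. if j \<in> S then Y ! j else X ! j) [0..<length X]"

lemma length_blend [simp]: "length (blend X Y S) = length X"
  by (simp add: blend_def)

lemma nth_blend [simp]: "j < length X \<Longrightarrow> blend X Y S ! j = (if j \<in> S then Y ! j else X ! j)"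
  by (simp add: blend_def)

lemma blend_empty [simp]: "blend X Y {} = X"
  by (rule nth_equalityI) auto

lemma blend_eq_right:
  assumes "length Y = length X" "mismatches X Y \<subseteq> S"
  shows "blend X Y S = Y"
  by (rule nth_equalityI) (use assms in \<open>auto simp: mismatches_def\<close>)

lemma blend_eq_iff:
  assumes "S \<subseteq> mismatches X Y" "T \<subseteq> mismatches X Y"
  shows "blend X Y S = blend X Y T \<longleftrightarrow> S = T"
proof
  assume eq: "blend X Y S = blend X Y T"
  have "j \<in> S \<longleftrightarrow> j \<in> T" if "j \<in> mismatches X Y" for j
    using that arg_cong[OF eq, of "\<lambda>Z. Z ! j"] by (auto simp: mismatches_def split: if_split_asm)
  then show "S = T" using assms by blast
qed simp

lemma ternary_blend: "ternary n X \<Longrightarrow> ternary n Y \<Longrightarrow> ternary n (blend X Y S)"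
  unfolding ternary_def by (auto simp: blend_def)

lemma differ_one_blend_insert:
  assumes "j \<in> mismatches X Y" "j \<notin> S"
  shows "differ_one (blend X Y S) (blend X Y (insert j S))"
proof -
  have "mismatches (blend X Y S) (blend X Y (insert j S)) = {j}"
    using assms by (auto simp: mismatches_def split: if_split_asm)
  then show ?thesis by (simp add: differ_one_iff_mismatches)
qed

definition flip_path :: "'a list \<Rightarrow> 'a list \<Rightarrow> nat list \<Rightarrow> 'a list list" where
  "flip_path X Y L = map (\<lambda>m. blend X Y (set (take m L))) [0..<Suc (length L)]"

lemma length_flip_path [simp]: "length (flip_path X Y L) = Suc (length L)"
  by (simp add: flip_path_def)

lemma nth_flip_path: "m \<le> length L \<Longrightarrow> flip_path X Y L ! m = blend X Y (set (take m L))"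
  unfolding flip_path_def by (simp del: upt_Suc)

lemma flip_path_ne [simp]: "flip_path X Y L \<noteq> []"
  by (simp add: flip_path_def)

lemma hd_flip_path [simp]: "hd (flip_path X Y L) = X"
  by (simp add: flip_path_def hd_map del: upt_Suc)

lemma set_flip_path: "set (flip_path X Y L) = (\<lambda>m. blend X Y (set (take m L))) ` {..length L}"
  unfolding flip_path_def set_map set_upt atLeast0LessThan lessThan_Suc_atMost ..

lemma flip_path_nth_cases:
  "w \<in> set (flip_path X Y L) \<Longrightarrow> j < length X \<Longrightarrow> w ! j = X ! j \<or> w ! j = Y ! j"
  by (auto simp: set_flip_path)

lemma cube_path_flip_path:
  assumes "ternary n X" "ternary n Y" "distinct L" "set L = mismatches X Y"
  shows "cube_path n X Y (flip_path X Y L)"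
proof -
  have len: "length Y = length X" using assms(1,2) by (simp add: ternary_def)
  have sub: "set (take m L) \<subseteq> mismatches X Y" for m
    using set_take_subset[of m L] assms(4) by simp
  have "last (flip_path X Y L) = Y"
    using blend_eq_right[OF len] assms(4)
    by (simp add: last_conv_nth nth_flip_path flip_path_def del: upt_Suc)
  moreover have "distinct (flip_path X Y L)"
  proof -
    have card_take: "card (set (take m L)) = m" if "m \<le> length L" for m
      using that assms(3) by (simp add: distinct_card)
    have "m = m'" if "m \<le> length L" "m' \<le> length L" "set (take m L) = set (take m' L)" for m m'
      using that card_take by metis
    then have "inj_on (\<lambda>m. blend X Y (set (take m L))) {0..<Suc (length L)}"
      by (intro inj_onI) (simp add: blend_eq_iff[OF sub sub])
    then show ?thesis by (simp add: flip_path_def distinct_map del: upt_Suc)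
  qed
  moreover have "successively differ_one (flip_path X Y L)"
    unfolding successively_conv_nth
  proof (intro allI impI)
    fix m assume "Suc m < length (flip_path X Y L)"
    then have m: "m < length L" by simp
    then have "L ! m \<in> mismatches X Y" "L ! m \<notin> set (take m L)"
      using assms(3) nth_mem[OF m]
      by (auto simp: assms(4)[symmetric] in_set_conv_nth nth_eq_iff_index_eq)
    then show "differ_one (flip_path X Y L ! m) (flip_path X Y L ! Suc m)"
      using m differ_one_blend_insert by (simp add: nth_flip_path take_Suc_conv_app_nth)
  qed
  moreover have "\<forall>w\<in>set (flip_path X Y L). ternary n w"
    using ternary_blend[OF assms(1,2)] by (auto simp: set_flip_path)
  ultimately show ?thesis by (simp add: cube_path_def)
qed

lemma flip_path_interior:
  assumes "length Y = length X" "set L = mismatches X Y"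
    and "w \<in> set (flip_path X Y L)" "w \<noteq> X" "w \<noteq> Y"
  obtains m where "0 < m" "m < length L" "w = blend X Y (set (take m L))"
proof -
  obtain m where m: "m \<le> length L" "w = blend X Y (set (take m L))"
    using assms(3) by (auto simp: set_flip_path)
  have "m \<noteq> 0" using m assms(4) by (cases m) auto
  moreover have "m \<noteq> length L" using m assms(5) blend_eq_right[OF assms(1)] assms(2) by auto
  ultimately show ?thesis using that m by simp
qed

text \<open>A proper nonempty prefix of R contains hd R but not last R, whereas a prefix of a
  nontrivial rotation of R either misses hd R or contains last R.\<close>

lemma set_take_rotate_neq:
  assumes "distinct R" "0 < m" "m < length R" "0 < k" "k < length R"
  shows "set (take m R) \<noteq> set (take m' (rotate k R))"
proof -
  have rot: "rotate k R = drop k R @ take k R"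
    using assms(5) by (simp add: rotate_drop_take)
  have "R ! 0 \<in> set (take m R)" "R ! 0 \<in> set (take k R)"
    using assms(2-5) nth_mem[of 0 "take m R"] nth_mem[of 0 "take k R"] by simp_all
  then have hd_R: "R ! 0 \<in> set (take m R)" "R ! 0 \<notin> set (drop k R)"
    using set_take_disj_set_drop_if_distinct[OF assms(1), of k k] by auto
  have "last R \<in> set (drop m R)" "last R \<in> set (drop k R)"
    using assms(3,5) last_in_set[of "drop _ R"] by (simp_all add: last_drop)
  then have last_R: "last R \<notin> set (take m R)" "last R \<in> set (drop k R)"
    using set_take_disj_set_drop_if_distinct[OF assms(1), of m m] by auto
  show ?thesis
  proof (cases "m' \<le> length R - k")
    case True
    then have "set (take m' (rotate k R)) \<subseteq> set (drop k R)"
      using rot by (simp add: set_take_subset)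
    then show ?thesis using hd_R by blast
  next
    case False
    then have "set (drop k R) \<subseteq> set (take m' (rotate k R))"
      using rot by simp
    then show ?thesis using last_R by blast
  qed
qed

definition geodesic :: "'a list \<Rightarrow> 'a list \<Rightarrow> nat \<Rightarrow> 'a list list" where
  "geodesic X Y k = flip_path X Y (rotate k (sorted_list_of_set (mismatches X Y)))"

lemma geodesic_ne [simp]: "geodesic X Y k \<noteq> []"
  by (simp add: geodesic_def)

lemma hd_geodesic [simp]: "hd (geodesic X Y k) = X"
  by (simp add: geodesic_def)

lemma length_geodesic: "length (geodesic X Y k) = Suc (card (mismatches X Y))"
  by (simp add: geodesic_def)

lemma card_mismatches_le: "card (mismatches X Y) \<le> length X"
  by (rule card_mono[of "{..<length X}", simplified]) (auto simp: mismatches_def)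

lemma geodesic_bound: "ternary n X \<Longrightarrow> length (geodesic X Y k) \<le> n + 1"
  using card_mismatches_le[of X Y] by (simp add: length_geodesic ternary_def)

lemma cube_path_geodesic: "ternary n X \<Longrightarrow> ternary n Y \<Longrightarrow> cube_path n X Y (geodesic X Y k)"
  unfolding geodesic_def by (rule cube_path_flip_path) simp_all

lemma geodesic_nth_cases:
  "w \<in> set (geodesic X Y k) \<Longrightarrow> j < length X \<Longrightarrow> w ! j = X ! j \<or> w ! j = Y ! j"
  unfolding geodesic_def by (rule flip_path_nth_cases)

lemma geodesics_internally_disjoint:
  assumes "length Y = length X" "k < card (mismatches X Y)" "k' < card (mismatches X Y)" "k \<noteq> k'"
  shows "set (geodesic X Y k) \<inter> set (geodesic X Y k') \<subseteq> {X, Y}"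
proof
  define L where "L = sorted_list_of_set (mismatches X Y)"
  have L: "distinct L" "set L = mismatches X Y" "length L = card (mismatches X Y)"
    by (simp_all add: L_def)
  have neq: "set (take m (rotate k L)) \<noteq> set (take m' (rotate k' L))"
    if "k < k'" "k' < length L" "0 < m" "m < length L" for k k' m m'
  proof -
    have "rotate k' L = rotate (k' - k) (rotate k L)"
      using that(1) by (simp add: rotate_rotate)
    then show ?thesis
      using set_take_rotate_neq[of "rotate k L" m "k' - k" m'] that L(1) by simp
  qed
  fix w assume w: "w \<in> set (geodesic X Y k) \<inter> set (geodesic X Y k')"
  show "w \<in> {X, Y}"
  proof (rule ccontr)
    assume "w \<notin> {X, Y}"
    have "\<exists>m. 0 < m \<and> m < length L \<and> w = blend X Y (set (take m (rotate i L)))"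
      if "w \<in> set (geodesic X Y i)" for i
      using flip_path_interior[OF assms(1), of "rotate i L" w] that \<open>w \<notin> {X, Y}\<close> L(2)
      unfolding geodesic_def L_def[symmetric] by auto
    then obtain m m' where m: "0 < m" "m < length L" "w = blend X Y (set (take m (rotate k L)))"
      and m': "0 < m'" "m' < length L" "w = blend X Y (set (take m' (rotate k' L)))"
      using w by blast
    have "set (take j (rotate i L)) \<subseteq> mismatches X Y" for i j
      using set_take_subset[of j "rotate i L"] L(2) by simp
    then have "set (take m (rotate k L)) = set (take m' (rotate k' L))"
      using m(3) m'(3) blend_eq_iff by metis
    then show False
      using neq[of k k' m m'] neq[of k' k m' m] m m' assms(2-4) L(3) by (metis linorder_neqE_nat)
  qed
qed

definition avoiding_moves :: "nat list \<Rightarrow> nat list \<Rightarrow> (nat \<times> nat) set" where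
  "avoiding_moves X Y = {(i, c). i < length X \<and> c < 3 \<and> c \<noteq> X ! i \<and> c \<noteq> Y ! i}"

lemma finite_avoiding_moves [simp]: "finite (avoiding_moves X Y)"
  by (rule finite_subset[of _ "{..<length X} \<times> {..<3}"]) (auto simp: avoiding_moves_def)

lemma card_avoiding_moves:
  assumes "ternary n X" "ternary n Y"
  shows "card (avoiding_moves X Y) + card (mismatches X Y) = 2 * n"
proof -
  have len: "length X = n" "length Y = n" using assms by (simp_all add: ternary_def)
  have per_coordinate:
    "card {c::nat. c < 3 \<and> c \<noteq> X ! i \<and> c \<noteq> Y ! i} + (if X ! i \<noteq> Y ! i then 1 else 0) = 2"
    if "i < n" for i
  proof -
    have "X ! i < 3" "Y ! i < 3" using assms that len by (auto simp: ternary_def)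
    moreover have "{c::nat. c < 3 \<and> c \<noteq> X ! i \<and> c \<noteq> Y ! i} = {..<3} - {X ! i, Y ! i}" by auto
    ultimately show ?thesis by (simp add: card_Diff_subset)
  qed
  have "avoiding_moves X Y = Sigma {..<n} (\<lambda>i. {c. c < 3 \<and> c \<noteq> X ! i \<and> c \<noteq> Y ! i})"
    by (auto simp: avoiding_moves_def len)
  then have "card (avoiding_moves X Y) = (\<Sum>i<n. card {c::nat. c < 3 \<and> c \<noteq> X ! i \<and> c \<noteq> Y ! i})"
    by (simp add: card_SigmaI)
  moreover have "card (mismatches X Y) = (\<Sum>i<n. if X ! i \<noteq> Y ! i then 1 else 0)"
    using sum.inter_filter[of "{..<n}" "\<lambda>_. 1::nat" "\<lambda>i. X ! i \<noteq> Y ! i"]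
    by (simp add: mismatches_def len)
  ultimately show ?thesis
    using per_coordinate by (simp add: sum.distrib[symmetric])
qed

definition neighbours :: "nat list \<Rightarrow> nat list set" where
  "neighbours X = (\<lambda>(i, c). X[i := c]) ` avoiding_moves X X"

lemma finite_neighbours [simp]: "finite (neighbours X)"
  by (simp add: neighbours_def)

lemma neighbours_ternary:
  "ternary n X \<Longrightarrow> Y \<in> neighbours X \<Longrightarrow> ternary n Y \<and> differ_one X Y"
  by (auto simp: neighbours_def avoiding_moves_def ternary_update differ_one_update)

lemma card_neighbours:
  assumes "ternary n X"
  shows "card (neighbours X) = 2 * n"
proof -
  have "inj_on (\<lambda>(i, c). X[i := c]) (avoiding_moves X X)"
    by (rule inj_onI) (auto simp: avoiding_moves_def dest: list_update_inj)
  then show ?thesis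
    using card_avoiding_moves[OF assms assms] by (simp add: neighbours_def card_image)
qed

definition detour :: "nat list \<Rightarrow> nat list \<Rightarrow> nat \<times> nat \<Rightarrow> nat list list" where
  "detour X Y m = (case m of (i, c) \<Rightarrow> X # geodesic (X[i := c]) (Y[i := c]) 0 @ [Y])"

lemma detour_interior:
  assumes "(i, c) \<in> avoiding_moves X Y" "length Y = length X"
    and "w \<in> set (detour X Y (i, c))" "w \<noteq> X" "w \<noteq> Y"
  shows "w ! i = c" "\<forall>j<length X. j \<noteq> i \<longrightarrow> w ! j = X ! j \<or> w ! j = Y ! j"
proof -
  have w: "w \<in> set (geodesic (X[i := c]) (Y[i := c]) 0)"
    using assms(3-5) by (simp add: detour_def)
  show "w ! i = c"
    using geodesic_nth_cases[OF w, of i] assms(1,2) by (auto simp: avoiding_moves_def)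
  show "\<forall>j<length X. j \<noteq> i \<longrightarrow> w ! j = X ! j \<or> w ! j = Y ! j"
  proof (intro allI impI)
    fix j assume "j < length X" "j \<noteq> i"
    then show "w ! j = X ! j \<or> w ! j = Y ! j" using geodesic_nth_cases[OF w, of j] by simp
  qed
qed

lemma cube_path_detour:
  assumes "ternary n X" "ternary n Y" "X \<noteq> Y" "(i, c) \<in> avoiding_moves X Y"
  shows "cube_path n X Y (detour X Y (i, c))" "length (detour X Y (i, c)) \<le> n + 3"
proof -
  have len: "length X = n" "length Y = n" using assms(1,2) by (simp_all add: ternary_def)
  have move: "i < n" "c < 3" "c \<noteq> X ! i" "c \<noteq> Y ! i"
    using assms(4) len by (auto simp: avoiding_moves_def)
  let ?G = "geodesic (X[i := c]) (Y[i := c]) 0"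
  have G: "cube_path n (X[i := c]) (Y[i := c]) ?G"
    using cube_path_geodesic ternary_update assms(1,2) move(2) by blast
  have "w ! i = c" if "w \<in> set ?G" for w
    using geodesic_nth_cases[OF that, of i] move(1) len by simp
  then have "X \<notin> set ?G" "Y \<notin> set ?G" using move(3,4) by blast+
  moreover have "differ_one X (X[i := c])" "differ_one (Y[i := c]) Y"
    using differ_one_update differ_one_sym move len by simp_all
  ultimately show "cube_path n X Y (detour X Y (i, c))"
    using G assms(1-3) unfolding cube_path_def detour_def
    by (simp add: successively_Cons successively_append_iff hd_append)
  have "card (mismatches (X[i := c]) (Y[i := c])) \<le> n"
    using card_mismatches_le len by (metis length_list_update)
  then show "length (detour X Y (i, c)) \<le> n + 3"
    by (simp add: detour_def length_geodesic)
qed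

definition cube_paths :: "nat list \<Rightarrow> nat list \<Rightarrow> nat list list set" where
  "cube_paths X Y = detour X Y ` avoiding_moves X Y \<union> geodesic X Y ` {..<card (mismatches X Y)}"

lemma cube_paths_cube_path:
  assumes "ternary n X" "ternary n Y" "X \<noteq> Y" "W \<in> cube_paths X Y"
  shows "cube_path n X Y W \<and> length W \<le> n + 3"
proof -
  have "length (geodesic X Y k) \<le> n + 3" for k
    using geodesic_bound[OF assms(1), of Y k] by simp
  then show ?thesis
    using assms cube_path_detour cube_path_geodesic by (auto simp: cube_paths_def)
qed

lemma cube_paths_internally_disjoint:
  assumes "length Y = length X"
  shows "pairwise (\<lambda>W W'. set W \<inter> set W' \<subseteq> {X, Y}) (cube_paths X Y)"
proof -
  have detour_geodesic: "set (detour X Y m) \<inter> set (geodesic X Y k) \<subseteq> {X, Y}"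
    if "m \<in> avoiding_moves X Y" for m k
  proof
    fix w assume w: "w \<in> set (detour X Y m) \<inter> set (geodesic X Y k)"
    obtain i c where m: "m = (i, c)" by fastforce
    then have "i < length X" "c \<noteq> X ! i" "c \<noteq> Y ! i"
      using that by (auto simp: avoiding_moves_def)
    then show "w \<in> {X, Y}"
      using w detour_interior(1)[of i c X Y w] geodesic_nth_cases[of w X Y k i] that m assms
      by auto
  qed
  have detour_detour: "set (detour X Y m) \<inter> set (detour X Y m') \<subseteq> {X, Y}"
    if "m \<in> avoiding_moves X Y" "m' \<in> avoiding_moves X Y" "m \<noteq> m'" for m m'
  proof
    fix w assume w: "w \<in> set (detour X Y m) \<inter> set (detour X Y m')"
    obtain i c i' c' where m: "m = (i, c)" "m' = (i', c')" by fastforce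
    then have "i < length X" "i' < length X" "c \<noteq> X ! i" "c \<noteq> Y ! i"
      using that by (auto simp: avoiding_moves_def)
    then show "w \<in> {X, Y}"
      using w detour_interior[of i c X Y w] detour_interior[of i' c' X Y w] that m assms
      by (cases "i = i'") auto
  qed
  show ?thesis
    unfolding cube_paths_def
  proof (rule pairwiseI)
    fix W W'
    assume "W \<in> detour X Y ` avoiding_moves X Y \<union> geodesic X Y ` {..<card (mismatches X Y)}"
      and "W' \<in> detour X Y ` avoiding_moves X Y \<union> geodesic X Y ` {..<card (mismatches X Y)}"
      and "W \<noteq> W'"
    then show "set W \<inter> set W' \<subseteq> {X, Y}"
      using detour_geodesic detour_detour geodesics_internally_disjoint[OF assms]
      by (elim UnE imageE) (metis Int_commute lessThan_iff)+
  qed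
qed

lemma detour_second: "detour X Y (i, c) ! 1 = X[i := c]"
  by (simp add: detour_def hd_conv_nth[symmetric])

lemma inj_on_detour: "inj_on (detour X Y) (avoiding_moves X Y)"
proof (rule inj_onI)
  fix m m' assume m: "m \<in> avoiding_moves X Y" "m' \<in> avoiding_moves X Y"
    "detour X Y m = detour X Y m'"
  obtain i c i' c' where ic: "m = (i, c)" "m' = (i', c')" by fastforce
  have "X[i := c] = X[i' := c']"
    using arg_cong[OF m(3), of "\<lambda>W. W ! 1"] detour_second[of X Y i c] detour_second[of X Y i' c']
    by (simp add: ic)
  then show "m = m'"
    using m(1,2) ic list_update_inj[of i X i' c c'] by (simp add: avoiding_moves_def)
qed

text \<open>Distinct geodesics share only their ends, so two equal ones consist of X and Y alone.\<close>

lemma inj_on_geodesic: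
  assumes "ternary n X" "ternary n Y"
  shows "inj_on (geodesic X Y) {..<card (mismatches X Y)}"
proof (rule inj_onI, rule ccontr)
  fix k k' assume k: "k \<in> {..<card (mismatches X Y)}" "k' \<in> {..<card (mismatches X Y)}"
    "geodesic X Y k = geodesic X Y k'" "k \<noteq> k'"
  then have "set (geodesic X Y k) \<subseteq> {X, Y}"
    using geodesics_internally_disjoint[of Y X k k'] assms by (auto simp: ternary_def)
  then have "card (set (geodesic X Y k)) \<le> card {X, Y}"
    by (intro card_mono) simp_all
  also have "\<dots> \<le> 2" by (cases "X = Y") simp_all
  finally have "card (mismatches X Y) \<le> 1"
    using cube_path_geodesic[OF assms, of k]
    by (simp add: cube_path_def distinct_card length_geodesic)
  then show False using k by auto
qed

lemma detour_neq_geodesic: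
  assumes "m \<in> avoiding_moves X Y" "length Y = length X"
  shows "detour X Y m \<noteq> geodesic X Y k"
proof
  assume eq: "detour X Y m = geodesic X Y k"
  obtain i c where m: "m = (i, c)" by fastforce
  then have "i < length X" "c \<noteq> X ! i" "c \<noteq> Y ! i"
    using assms(1) by (auto simp: avoiding_moves_def)
  moreover have "X[i := c] \<in> set (geodesic X Y k)"
    using eq[symmetric] m nth_mem[of 1 "detour X Y m"] detour_second[of X Y i c]
    by (simp add: detour_def)
  ultimately show False
    using geodesic_nth_cases[of "X[i := c]" X Y k i] by simp
qed

lemma card_cube_paths:
  assumes "ternary n X" "ternary n Y"
  shows "card (cube_paths X Y) = 2 * n"
proof -
  have "length Y = length X" using assms by (simp add: ternary_def)
  then have "detour X Y ` avoiding_moves X Y \<inter> geodesic X Y ` {..<card (mismatches X Y)} = {}"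
    using detour_neq_geodesic by blast
  then have "card (cube_paths X Y) = card (avoiding_moves X Y) + card (mismatches X Y)"
    using inj_on_detour inj_on_geodesic[OF assms]
    by (simp add: cube_paths_def card_Un_disjoint card_image)
  then show ?thesis
    using card_avoiding_moves[OF assms] by simp
qed

section \<open>Frames and ladders\<close>

lemma e3c_path_iff_successively:
  "e3c_path r s t u v p \<longleftrightarrow> p \<noteq> [] \<and> hd p = u \<and> last p = v \<and> distinct p \<and>
     set p \<subseteq> e3c_verts r s t \<and> successively (e3c_adj r s t) p"
  by (simp add: e3c_path_def successively_conv_nth)

lemma in_e3c_verts [simp]:
  "(a, b, c, d) \<in> e3c_verts r s t \<longleftrightarrow> ternary r a \<and> ternary s b \<and> ternary t c \<and> d < 3"
  by (simp add: e3c_verts_def)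

lemma e3c_adj_iff:
  "e3c_adj r s t (a, b, c, d) (a', b', c', d') \<longleftrightarrow>
     (a, b, c, d) \<in> e3c_verts r s t \<and> (a', b', c', d') \<in> e3c_verts r s t \<and>
     (a, b, c, d) \<noteq> (a', b', c', d') \<and>
     ((a = a' \<and> b = b' \<and> c = c' \<and> d \<noteq> d')
      \<or> (d = 0 \<and> d' = 0 \<and> a = a' \<and> b = b' \<and> differ_one c c')
      \<or> (d = 1 \<and> d' = 1 \<and> a = a' \<and> c = c' \<and> differ_one b b')
      \<or> (d = 2 \<and> d' = 2 \<and> b = b' \<and> c = c' \<and> differ_one a a'))"
  by (simp add: e3c_adj_def)

lemma e3c_adj_commute: "e3c_adj r s t x y \<longleftrightarrow> e3c_adj r s t y x"
  by (cases x, cases y) (auto simp: e3c_adj_iff dest: differ_one_sym)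

lemma successively_e3c_adj_rev [simp]:
  "successively (e3c_adj r s t) (rev xs) \<longleftrightarrow> successively (e3c_adj r s t) xs"
  using e3c_adj_commute[of r s t] by (simp add: successively_rev)

lemma e3c_path_rev: "e3c_path r s t u v p \<Longrightarrow> e3c_path r s t v u (rev p)"
  by (simp add: e3c_path_iff_successively hd_rev last_rev del: successively_rev)

lemma e3c_path_glue:
  assumes p: "e3c_path r s t u x p" and q: "e3c_path r s t x v q" and "set p \<inter> set q \<subseteq> {x}"
  shows "e3c_path r s t u v (butlast p @ q)"
proof -
  have p_snoc: "p = butlast p @ [x]" using p by (metis append_butlast_last_id e3c_path_def)
  then have "x \<notin> set (butlast p)" using p
    by (metis distinct_append e3c_path_def not_distinct_conv_prefix)
  then have "set (butlast p) \<inter> set q = {}" using assms(3) in_set_butlastD by fastforce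
  moreover have "successively (e3c_adj r s t) (butlast p @ [x])" using p p_snoc
    by (simp add: e3c_path_iff_successively)
  moreover have "hd (butlast p @ q) = u"
    using p q p_snoc by (cases "butlast p") (auto simp: e3c_path_def)
  ultimately show ?thesis
    using p q by (auto simp: e3c_path_iff_successively successively_append_iff distinct_butlast
      dest: in_set_butlastD)
qed

text \<open>A frame is a vertex without its B-part. Since the B-part changes only along E2 edges,
  which lie in layer 1, adjacency of frames placed at a common level b does not depend on b.\<close>

type_synonym e3frame = "nat list \<times> nat list \<times> nat"

definition place :: "nat list \<Rightarrow> e3frame \<Rightarrow> e3vertex" where
  "place b f = (case f of (a, c, e) \<Rightarrow> (a, b, c, e))"

definition frame :: "e3vertex \<Rightarrow> e3frame" where
  "frame x = (case x of (a, b, c, e) \<Rightarrow> (a, c, e))"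

lemma place_conv [simp]: "place b (a, c, e) = (a, b, c, e)"
  by (simp add: place_def)

lemma frame_conv [simp]: "frame (a, b, c, e) = (a, c, e)"
  by (simp add: frame_def)

lemma frame_place [simp]: "frame (place b f) = f"
  by (cases f) simp

lemma place_eq_iff [simp]: "place b f = place b' f' \<longleftrightarrow> b = b' \<and> f = f'"
  by (cases f, cases f') auto

lemma place_eq_conv [simp]: "place b f = (a, b', c, e) \<longleftrightarrow> b = b' \<and> f = (a, c, e)"
  by (cases f) auto

lemma distinct_map_place [simp]: "distinct (map (place b) F) \<longleftrightarrow> distinct F"
  by (simp add: distinct_map inj_on_def)

lemma e3c_adj_place_level:
  assumes "ternary s b" "ternary s b'"
  shows "e3c_adj r s t (place b f) (place b g) \<longleftrightarrow> e3c_adj r s t (place b' f) (place b' g)"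
  using assms by (cases f, cases g) (auto simp: e3c_adj_iff dest: differ_one_neq)

lemma e3c_path_place_level:
  assumes "ternary s b" "ternary s b'" "e3c_path r s t (place b f) (place b g) (map (place b) F)"
  shows "e3c_path r s t (place b' f) (place b' g) (map (place b') F)"
proof -
  have F: "F \<noteq> []" "hd F = f" "last F = g" "distinct F"
    using assms(3) by (auto simp: e3c_path_def hd_map last_map)
  have "place b' x \<in> e3c_verts r s t" if "x \<in> set F" for x
    using assms(1-3) that by (cases x) (auto simp: e3c_path_def)
  moreover have "successively (\<lambda>x y. e3c_adj r s t (place b' x) (place b' y)) F"
    using assms(3) e3c_adj_place_level[OF assms(1,2)]
    by (simp add: e3c_path_iff_successively successively_map)
  ultimately show ?thesis
    using F by (auto simp: e3c_path_iff_successively successively_map hd_map last_map)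
qed

lemma e3c_path_lift:
  assumes "ternary r a" "ternary t c" "cube_path s B B' W"
  shows "e3c_path r s t (a, B, c, 1) (a, B', c, 1) (map (\<lambda>b. (a, b, c, 1)) W)"
proof -
  have "e3c_adj r s t (a, b, c, 1) (a, b', c, 1)"
    if "b \<in> set W" "b' \<in> set W" "differ_one b b'" for b b'
    using assms that by (simp add: e3c_adj_iff differ_one_neq cube_path_def)
  then show ?thesis
    using assms by (auto simp: e3c_path_iff_successively cube_path_def successively_map hd_map
      last_map distinct_map inj_on_def elim!: successively_mono)
qed

definition ladder :: "e3frame list \<Rightarrow> nat list list \<Rightarrow> e3vertex list" where
  "ladder F W = map (place (hd W)) (butlast F) @ map (\<lambda>b. place b (last F)) W @
     rev (map (place (last W)) (butlast F))"

lemma length_ladder: "length (ladder F W) = 2 * (length F - 1) + length W"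
  by (simp add: ladder_def)

lemma frame_ladder: "x \<in> set (ladder F W) \<Longrightarrow> F \<noteq> [] \<Longrightarrow> frame x \<in> set F"
  by (auto simp: ladder_def dest: in_set_butlastD)

lemma ladder_bridge_mem: "W \<noteq> [] \<Longrightarrow> place (hd W) (last F) \<in> set (ladder F W)"
  by (simp add: ladder_def)

lemma ladder_vertex_at_start:
  assumes "x \<in> set (ladder F W)" "frame x = hd F" "last F \<noteq> hd F"
  shows "x \<in> {place (hd W) (hd F), place (last W) (hd F)}"
proof -
  consider y where "x = place (hd W) y" | b where "x = place b (last F)"
    | y where "x = place (last W) y"
    using assms(1) unfolding ladder_def by fastforce
  then show ?thesis
    using assms(2,3) by cases auto
qed

lemma ladders_internally_disjoint:
  assumes "set F \<inter> set F' \<subseteq> {f}" "F \<noteq> []" "F' \<noteq> []" "hd F' = f" "last F' \<noteq> f"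
    and "hd W' = hd W" "last W' = last W"
  shows "set (ladder F W) \<inter> set (ladder F' W') \<subseteq> {place (hd W) f, place (last W) f}"
proof
  fix x assume x: "x \<in> set (ladder F W) \<inter> set (ladder F' W')"
  then have "frame x = f" using assms(1-3) frame_ladder by blast
  then show "x \<in> {place (hd W) f, place (last W) f}"
    using ladder_vertex_at_start[of x F' W'] x assms(4-7) by simp
qed

lemma e3c_path_ladder:
  assumes F: "e3c_path r s t (place B f) (place B (a, c, 1)) (map (place B) F)"
    and W: "cube_path s B B' W" "B \<noteq> B'"
  shows "e3c_path r s t (place B f) (place B' f) (ladder F W)"
proof -
  have tB: "ternary s B" "ternary s B'" using W by (auto simp: cube_path_def)
  have Fne: "F \<noteq> []" "last F = (a, c, 1)" using F by (auto simp: e3c_path_def last_map)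
  then have "ternary r a" "ternary t c"
    using F last_in_set[OF Fne(1)] by (auto simp: e3c_path_def)
  then have M: "e3c_path r s t (place B (a, c, 1)) (place B' (a, c, 1)) (map (\<lambda>b. (a, b, c, 1)) W)"
    using e3c_path_lift W(1) by simp
  have Y: "e3c_path r s t (place B' (a, c, 1)) (place B' f) (rev (map (place B') F))"
    using e3c_path_rev e3c_path_place_level[OF tB F] by blast
  have MY: "e3c_path r s t (place B (a, c, 1)) (place B' f)
      (butlast (map (\<lambda>b. (a, b, c, 1)) W) @ rev (map (place B') F))"
    by (rule e3c_path_glue[OF M Y]) auto
  have "e3c_path r s t (place B f) (place B' f) (butlast (map (place B) F) @
      butlast (map (\<lambda>b. (a, b, c, 1)) W) @ rev (map (place B') F))"
    by (rule e3c_path_glue[OF F MY]) (use W(2) in \<open>auto dest: in_set_butlastD\<close>)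
  moreover have "butlast (map (\<lambda>b. (a, b, c, 1::nat)) W) @ rev (map (place B') F) =
      map (\<lambda>b. (a, b, c, 1)) W @ rev (map (place B') (butlast F))"
  proof -
    obtain F0 W0 where "F = F0 @ [(a, c, 1)]" "W = W0 @ [B']"
      using Fne W(1) unfolding cube_path_def by (metis append_butlast_last_id)
    then show ?thesis by simp
  qed
  ultimately show ?thesis
    using W(1) Fne(2) by (simp add: ladder_def map_butlast cube_path_def)
qed

section \<open>Families of internally disjoint paths\<close>

definition internally_disjoint_paths ::
    "nat \<Rightarrow> nat \<Rightarrow> nat \<Rightarrow> nat \<Rightarrow> e3vertex \<Rightarrow> e3vertex \<Rightarrow> e3vertex list set \<Rightarrow> bool" where
  "internally_disjoint_paths r s t l u v P \<longleftrightarrow> finite P \<and>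
     (\<forall>p\<in>P. e3c_path r s t u v p \<and> length p - 1 \<le> l) \<and>
     pairwise (\<lambda>p q. set p \<inter> set q \<subseteq> {u, v}) P"

lemma internally_disjoint_paths_Un:
  assumes "internally_disjoint_paths r s t l u v P" "internally_disjoint_paths r s t l u v Q"
    and "\<And>p q. p \<in> P \<Longrightarrow> q \<in> Q \<Longrightarrow> set p \<inter> set q \<subseteq> {u, v}"
  shows "internally_disjoint_paths r s t l u v (P \<union> Q)"
  using assms unfolding internally_disjoint_paths_def pairwise_def by blast

lemma internally_disjoint_path_list:
  assumes "internally_disjoint_paths r s t l u v P" "k \<le> card P"
  shows "\<exists>ps. length ps = k \<and> distinct ps \<and>
           (\<forall>p\<in>set ps. e3c_path r s t u v p \<and> length p - 1 \<le> l) \<and>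
           (\<forall>i j. i < length ps \<and> j < length ps \<and> i \<noteq> j \<longrightarrow>
              set (ps ! i) \<inter> set (ps ! j) = {u, v})"
proof -
  have P: "finite P" "\<forall>p\<in>P. e3c_path r s t u v p \<and> length p - 1 \<le> l"
      "pairwise (\<lambda>p q. set p \<inter> set q \<subseteq> {u, v}) P"
    using assms(1) by (simp_all add: internally_disjoint_paths_def)
  obtain xs where xs: "set xs = P" "distinct xs"
    using finite_distinct_list[OF P(1)] by blast
  have ends: "u \<in> set p" "v \<in> set p" if "p \<in> P" for p
    using P(2) that hd_in_set last_in_set by (fastforce simp: e3c_path_def)+
  show ?thesis
  proof (intro exI conjI allI impI)
    show "length (take k xs) = k"
      using assms(2) xs by (simp add: distinct_card[symmetric])
    show "distinct (take k xs)" using xs(2) by simp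
    have "set (take k xs) \<subseteq> P" using set_take_subset[of k xs] xs(1) by simp
    then show "\<forall>p\<in>set (take k xs). e3c_path r s t u v p \<and> length p - 1 \<le> l"
      using P(2) by blast
    fix i j assume ij: "i < length (take k xs) \<and> j < length (take k xs) \<and> i \<noteq> j"
    then have "xs ! i \<noteq> xs ! j" "xs ! i \<in> P" "xs ! j \<in> P"
      using xs by (auto simp: nth_eq_iff_index_eq)
    then show "set (take k xs ! i) \<inter> set (take k xs ! j) = {u, v}"
      using P(3) ends ij by (auto simp: pairwise_def)
  qed
qed

definition frame_route :: "nat \<Rightarrow> nat \<Rightarrow> nat \<Rightarrow> nat list \<Rightarrow> e3frame \<Rightarrow> e3frame list \<Rightarrow> bool" where
  "frame_route r s t b f F \<longleftrightarrow>
     (\<exists>a c. (a, c, 1) \<noteq> f \<and> e3c_path r s t (place b f) (place b (a, c, 1)) (map (place b) F))"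

lemma frame_route_ends:
  "frame_route r s t b f F \<Longrightarrow> F \<noteq> [] \<and> hd F = f \<and> last F \<noteq> f"
  by (auto simp: frame_route_def e3c_path_def hd_map last_map)

lemma ladder_interior_vertex:
  assumes "frame_route r s t b f F" "W \<noteq> []"
  shows "place (hd W) (last F) \<in> set (ladder F W) - {place (hd W) f, place (last W) f}"
  using ladder_bridge_mem[OF assms(2)] frame_route_ends[OF assms(1)] by auto

lemma ladder_meets_lift:
  assumes "frame_route r s t b f F" "hd W' = hd W" "last W' = last W"
  shows "set (ladder F W) \<inter> set (map (\<lambda>b. place b f) W') \<subseteq> {place (hd W) f, place (last W) f}"
proof -
  have "map (\<lambda>b. place b f) W' = ladder [f] W'" by (simp add: ladder_def)
  then show ?thesis
    using ladders_internally_disjoint[where F="[f]" and F'=F and W=W' and W'=W]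
      frame_route_ends[OF assms(1)] assms(2,3) by auto
qed

lemma ladder_family:
  assumes "finite \<F>" "\<forall>F\<in>\<F>. frame_route r s t B f F \<and> length F \<le> 4"
    and disj: "pairwise (\<lambda>F F'. set F \<inter> set F' \<subseteq> {f}) \<F>"
    and W: "cube_path s B B' W" "length W \<le> s + 1" "B \<noteq> B'"
  shows "internally_disjoint_paths r s t (s + 6) (place B f) (place B' f) ((\<lambda>F. ladder F W) ` \<F>)"
    and "card ((\<lambda>F. ladder F W) ` \<F>) = card \<F>"
proof -
  have W': "W \<noteq> []" "hd W = B" "last W = B'" using W(1) by (simp_all add: cube_path_def)
  have F: "F \<noteq> []" "hd F = f" "last F \<noteq> f"
    "e3c_path r s t (place B f) (place B' f) (ladder F W)" "length (ladder F W) - 1 \<le> s + 6"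
    if "F \<in> \<F>" for F
  proof -
    have route: "frame_route r s t B f F" "length F \<le> 4" using assms(2) that by blast+
    then show "F \<noteq> []" "hd F = f" "last F \<noteq> f" using frame_route_ends by blast+
    show "e3c_path r s t (place B f) (place B' f) (ladder F W)"
      using route(1) e3c_path_ladder[OF _ W(1,3)] unfolding frame_route_def by blast
    show "length (ladder F W) - 1 \<le> s + 6"
      using route(2) W(2) by (simp add: length_ladder)
  qed
  have meet: "set (ladder F W) \<inter> set (ladder F' W) \<subseteq> {place B f, place B' f}"
    if "F \<in> \<F>" "F' \<in> \<F>" "F \<noteq> F'" for F F'
  proof -
    have "set F \<inter> set F' \<subseteq> {f}" using disj that unfolding pairwise_def by blast
    then show ?thesis
      using ladders_internally_disjoint[of F F' f W W] F[OF that(1)] F[OF that(2)] W' by simp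
  qed
  have "inj_on (\<lambda>F. ladder F W) \<F>"
  proof (rule inj_onI, rule ccontr)
    fix F F' assume FF': "F \<in> \<F>" "F' \<in> \<F>" "ladder F W = ladder F' W" "F \<noteq> F'"
    then show False
      using meet[of F F'] ladder_interior_vertex[OF _ W'(1), of r s t B f F] assms(2) W' by auto
  qed
  then show "card ((\<lambda>F. ladder F W) ` \<F>) = card \<F>" by (rule card_image)
  have "pairwise (\<lambda>p q. set p \<inter> set q \<subseteq> {place B f, place B' f}) ((\<lambda>F. ladder F W) ` \<F>)"
    by (rule pairwise_imageI) (simp add: meet)
  then show "internally_disjoint_paths r s t (s + 6) (place B f) (place B' f)
    ((\<lambda>F. ladder F W) ` \<F>)"
    using F(4,5) assms(1) by (auto simp: internally_disjoint_paths_def)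
qed

lemma lifted_cube_paths:
  assumes "ternary r a" "ternary t c" "ternary s B" "ternary s B'" "B \<noteq> B'"
  shows "internally_disjoint_paths r s t (s + 6) (a, B, c, 1) (a, B', c, 1)
           (map (\<lambda>b. (a, b, c, 1)) ` cube_paths B B')"
    and "card (map (\<lambda>b. (a, b, c, 1::nat)) ` cube_paths B B') = 2 * s"
proof -
  have "inj_on (map (\<lambda>b. (a, b, c, 1::nat))) (cube_paths B B')"
    by (rule inj_on_subset[OF inj_mapI subset_UNIV]) (simp add: inj_def)
  then show "card (map (\<lambda>b. (a, b, c, 1::nat)) ` cube_paths B B') = 2 * s"
    using card_image card_cube_paths[OF assms(3,4)] by metis
  have "e3c_path r s t (a, B, c, 1) (a, B', c, 1) (map (\<lambda>b. (a, b, c, 1)) W) \<and>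
      length (map (\<lambda>b. (a, b, c, 1::nat)) W) - 1 \<le> s + 6" if "W \<in> cube_paths B B'" for W
    using e3c_path_lift[OF assms(1,2)] cube_paths_cube_path[OF assms(3-5) that] by auto
  moreover have "pairwise (\<lambda>p q. set p \<inter> set q \<subseteq> {(a, B, c, 1), (a, B', c, 1)})
      (map (\<lambda>b. (a, b, c, 1::nat)) ` cube_paths B B')"
    using cube_paths_internally_disjoint[of B' B] assms(3,4)
    by (intro pairwise_imageI) (auto simp: pairwise_def ternary_def)
  ultimately show "internally_disjoint_paths r s t (s + 6) (a, B, c, 1) (a, B', c, 1)
      (map (\<lambda>b. (a, b, c, 1)) ` cube_paths B B')"
    by (simp add: internally_disjoint_paths_def cube_paths_def)
qed

definition c_route :: "nat list \<Rightarrow> nat list \<Rightarrow> nat \<Rightarrow> nat list \<Rightarrow> e3frame list" where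
  "c_route A C d C' = (if d = 0 then [] else [(A, C, d)]) @ [(A, C, 0), (A, C', 0), (A, C', 1)]"

definition a_route :: "nat list \<Rightarrow> nat list \<Rightarrow> nat \<Rightarrow> nat list \<Rightarrow> e3frame list" where
  "a_route A C d A' = (if d = 2 then [] else [(A, C, d)]) @ [(A, C, 2), (A', C, 2), (A', C, 1)]"

lemma length_c_route: "length (c_route A C d C') \<le> 4"
  by (simp add: c_route_def)

lemma length_a_route: "length (a_route A C d A') \<le> 4"
  by (simp add: a_route_def)

lemma frame_route_direct:
  assumes "ternary r A" "ternary s B" "ternary t C" "d < 3" "d \<noteq> 1"
  shows "frame_route r s t B (A, C, d) [(A, C, d), (A, C, 1)]"
  unfolding frame_route_def
  using assms by (intro exI[of _ A] exI[of _ C]) (simp add: e3c_path_iff_successively e3c_adj_iff)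

lemma frame_route_c_route:
  assumes "ternary r A" "ternary s B" "ternary t C" "d < 3" "ternary t C'" "differ_one C C'"
  shows "frame_route r s t B (A, C, d) (c_route A C d C')"
  unfolding frame_route_def
  using assms differ_one_neq[OF assms(6)]
  by (intro exI[of _ A] exI[of _ C'])
    (cases "d = 0"; auto simp: c_route_def e3c_path_iff_successively e3c_adj_iff)

lemma frame_route_a_route:
  assumes "ternary r A" "ternary s B" "ternary t C" "d < 3" "ternary r A'" "differ_one A A'"
  shows "frame_route r s t B (A, C, d) (a_route A C d A')"
  unfolding frame_route_def
  using assms differ_one_neq[OF assms(6)]
  by (intro exI[of _ A'] exI[of _ C])
    (cases "d = 2"; auto simp: a_route_def e3c_path_iff_successively e3c_adj_iff)

lemma neighbour_exists:
  assumes "ternary n X" "1 \<le> n"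
  obtains Y where "ternary n Y" "differ_one X Y"
proof -
  have "neighbours X \<noteq> {}" using card_neighbours[OF assms(1)] assms(2) by auto
  then show ?thesis using neighbours_ternary[OF assms(1)] that by blast
qed

lemma internally_disjoint_paths_layer0:
  assumes "1 \<le> r" "r \<le> t" "ternary r A" "ternary s B" "ternary s B'" "ternary t C" "B \<noteq> B'"
  shows "\<exists>P. internally_disjoint_paths r s t (s + 6) (A, B, C, 0) (A, B', C, 0) P
    \<and> 2 * r + 2 \<le> card P"
proof -
  obtain A1 where A1: "ternary r A1" "differ_one A A1"
    using neighbour_exists[OF assms(3,1)] .
  have C': "ternary t C' \<and> differ_one C C' \<and> C' \<noteq> C" if "C' \<in> neighbours C" for C'
    using neighbours_ternary[OF assms(6) that] differ_one_neq by blast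
  define \<F> where "\<F> = insert [(A, C, 0), (A, C, 1)]
    (insert (a_route A C 0 A1) (c_route A C 0 ` neighbours C))"
  have "\<forall>F\<in>\<F>. frame_route r s t B (A, C, 0) F \<and> length F \<le> 4"
    using frame_route_direct[OF assms(3,4,6), of 0] frame_route_a_route[OF assms(3,4,6) _ A1, of 0]
      frame_route_c_route[OF assms(3,4,6), of 0] C'
    by (auto simp: \<F>_def length_a_route length_c_route)
  moreover have "pairwise (\<lambda>F F'. set F \<inter> set F' \<subseteq> {(A, C, 0)}) \<F>"
    using C' differ_one_neq[OF A1(2)]
    by (auto simp: \<F>_def pairwise_insert pairwise_image a_route_def c_route_def pairwise_def)
  moreover have "card \<F> = 2 * t + 2"
  proof -
    have "inj_on (c_route A C 0) (neighbours C)" by (rule inj_onI) (simp add: c_route_def)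
    moreover have
      "[(A, C, 0), (A, C, 1)] \<notin> insert (a_route A C 0 A1) (c_route A C 0 ` neighbours C)"
      "a_route A C 0 A1 \<notin> c_route A C 0 ` neighbours C"
      by (auto simp: a_route_def c_route_def)
    ultimately show ?thesis
      using card_neighbours[OF assms(6)] by (simp add: \<F>_def card_image)
  qed
  moreover have "finite \<F>" by (simp add: \<F>_def)
  ultimately show ?thesis
    using ladder_family[OF _ _ _ cube_path_geodesic[OF assms(4,5)]
      geodesic_bound[OF assms(4)] assms(7)] assms(2)
    by fastforce
qed

lemma internally_disjoint_paths_layer2:
  assumes "1 \<le> r" "r \<le> t" "ternary r A" "ternary s B" "ternary s B'" "ternary t C" "B \<noteq> B'"
  shows "\<exists>P. internally_disjoint_paths r s t (s + 6) (A, B, C, 2) (A, B', C, 2) P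
    \<and> 2 * r + 2 \<le> card P"
proof -
  obtain C1 where C1: "ternary t C1" "differ_one C C1"
    using neighbour_exists[OF assms(6)] assms(1,2) by auto
  have A': "ternary r A' \<and> differ_one A A' \<and> A' \<noteq> A" if "A' \<in> neighbours A" for A'
    using neighbours_ternary[OF assms(3) that] differ_one_neq by blast
  define \<F> where "\<F> = insert [(A, C, 2), (A, C, 1)]
    (insert (c_route A C 2 C1) (a_route A C 2 ` neighbours A))"
  have "\<forall>F\<in>\<F>. frame_route r s t B (A, C, 2) F \<and> length F \<le> 4"
    using frame_route_direct[OF assms(3,4,6), of 2] frame_route_c_route[OF assms(3,4,6) _ C1, of 2]
      frame_route_a_route[OF assms(3,4,6), of 2] A'
    by (auto simp: \<F>_def length_a_route length_c_route)
  moreover have "pairwise (\<lambda>F F'. set F \<inter> set F' \<subseteq> {(A, C, 2)}) \<F>"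
    using A' differ_one_neq[OF C1(2)]
    by (auto simp: \<F>_def pairwise_insert pairwise_image a_route_def c_route_def pairwise_def)
  moreover have "card \<F> = 2 * r + 2"
  proof -
    have "inj_on (a_route A C 2) (neighbours A)" by (rule inj_onI) (simp add: a_route_def)
    moreover have
      "[(A, C, 2), (A, C, 1)] \<notin> insert (c_route A C 2 C1) (a_route A C 2 ` neighbours A)"
      "c_route A C 2 C1 \<notin> a_route A C 2 ` neighbours A"
      by (auto simp: a_route_def c_route_def)
    ultimately show ?thesis
      using card_neighbours[OF assms(3)] by (simp add: \<F>_def card_image)
  qed
  moreover have "finite \<F>" by (simp add: \<F>_def)
  ultimately show ?thesis
    using ladder_family[OF _ _ _ cube_path_geodesic[OF assms(4,5)]
      geodesic_bound[OF assms(4)] assms(7)]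
    by fastforce
qed

lemma internally_disjoint_paths_layer1:
  assumes "1 \<le> r" "r \<le> s" "s \<le> t" "ternary r A" "ternary s B" "ternary s B'" "ternary t C" "B \<noteq> B'"
  shows "\<exists>P. internally_disjoint_paths r s t (s + 6) (A, B, C, 1) (A, B', C, 1) P
    \<and> 2 * r + 2 \<le> card P"
proof -
  obtain A1 where A1: "ternary r A1" "differ_one A A1"
    using neighbour_exists[OF assms(4,1)] .
  obtain C1 where C1: "ternary t C1" "differ_one C C1"
    using neighbour_exists[OF assms(7)] assms(1-3) by auto
  define \<F> where "\<F> = {c_route A C 1 C1, a_route A C 1 A1}"
  define P where "P = (\<lambda>F. ladder F (geodesic B B' 0)) ` \<F>"
  define Q where "Q = map (\<lambda>b. (A, b, C, 1::nat)) ` cube_paths B B'"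
  have routes: "\<forall>F\<in>\<F>. frame_route r s t B (A, C, 1) F \<and> length F \<le> 4"
    using frame_route_c_route[OF assms(4,5,7) _ C1, of 1]
      frame_route_a_route[OF assms(4,5,7) _ A1, of 1]
    by (simp add: \<F>_def length_a_route length_c_route)
  have disj: "pairwise (\<lambda>F F'. set F \<inter> set F' \<subseteq> {(A, C, 1)}) \<F>"
    using differ_one_neq[OF A1(2)] by (auto simp: \<F>_def pairwise_insert a_route_def c_route_def)
  have fin: "finite \<F>" and "card \<F> = 2"
    using differ_one_neq[OF A1(2)] by (simp_all add: \<F>_def a_route_def c_route_def)
  then have P: "internally_disjoint_paths r s t (s + 6) (A, B, C, 1) (A, B', C, 1) P" "card P = 2"
    using ladder_family[OF fin routes disj cube_path_geodesic[OF assms(5,6)]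
      geodesic_bound[OF assms(5)] assms(8)]
    by (simp_all add: P_def)
  have Q: "internally_disjoint_paths r s t (s + 6) (A, B, C, 1) (A, B', C, 1) Q" "card Q = 2 * s"
    using lifted_cube_paths[OF assms(4,7,5,6,8)] by (simp_all add: Q_def)
  have meet: "set p \<inter> set q \<subseteq> {(A, B, C, 1), (A, B', C, 1)}" if pq: "p \<in> P" "q \<in> Q" for p q
  proof -
    obtain F W where FW: "F \<in> \<F>" "p = ladder F (geodesic B B' 0)" "W \<in> cube_paths B B'"
        "q = map (\<lambda>b. place b (A, C, 1)) W"
      using pq by (auto simp: P_def Q_def)
    have "hd W = B" "last W = B'" "last (geodesic B B' 0) = B'"
      using cube_paths_cube_path[OF assms(5,6,8) FW(3)] cube_path_geodesic[OF assms(5,6)]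
      by (simp_all add: cube_path_def)
    then show ?thesis
      using ladder_meets_lift[of r s t B "(A, C, 1)" F W "geodesic B B' 0"] routes FW by simp
  qed
  have "P \<inter> Q = {}"
  proof -
    have "\<not> set p \<subseteq> {(A, B, C, 1), (A, B', C, 1)}" if p: "p \<in> P" for p
      using p ladder_interior_vertex[of r s t B "(A, C, 1)" _ "geodesic B B' 0"] routes
      by (fastforce simp: P_def)
    then show ?thesis using meet by blast
  qed
  then have "card (P \<union> Q) = 2 * s + 2"
    using P Q by (simp add: card_Un_disjoint internally_disjoint_paths_def)
  then show ?thesis
    using internally_disjoint_paths_Un[OF P(1) Q(1) meet] assms(2) by auto
qed

theorem lemma8:
  fixes r s t :: nat and A B B' C :: "nat list" and d :: nat
  assumes "1 \<le> r" "r \<le> s" "s \<le> t"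
    and "(A,B,C,d) \<in> e3c_verts r s t" and "(A,B',C,d) \<in> e3c_verts r s t"
    and "B \<noteq> B'"
  shows "\<exists>ps :: e3vertex list list.
           length ps = 2*r + 2 \<and> distinct ps \<and>
           (\<forall>p\<in>set ps. e3c_path r s t (A,B,C,d) (A,B',C,d) p \<and> length p - 1 \<le> s + 6) \<and>
           (\<forall>i j. i < length ps \<and> j < length ps \<and> i \<noteq> j \<longrightarrow>
              set (ps ! i) \<inter> set (ps ! j) = {(A,B,C,d), (A,B',C,d)})"
proof -
  have v: "ternary r A" "ternary s B" "ternary s B'" "ternary t C" "d < 3"
    using assms(4,5) by simp_all
  have "r \<le> t" using assms(2,3) by simp
  consider "d = 0" | "d = 1" | "d = 2" using v(5) by linarith
  then have "\<exists>P. internally_disjoint_paths r s t (s + 6) (A, B, C, d) (A, B', C, d) P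
    \<and> 2 * r + 2 \<le> card P"
    using internally_disjoint_paths_layer0[OF assms(1) \<open>r \<le> t\<close> v(1-4) assms(6)]
      internally_disjoint_paths_layer1[OF assms(1-3) v(1-4) assms(6)]
      internally_disjoint_paths_layer2[OF assms(1) \<open>r \<le> t\<close> v(1-4) assms(6)]
    by cases simp_all
  then show ?thesis using internally_disjoint_path_list by blast
qed

end
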